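(* Let $d_1\ge\cdots\ge d_n\ge1$ be integers, $\Delta=d_1$, $\xi$ as in the context, and $M_i^*=M_i+M_1$ for $i=2,3$. Then (a) $\xi=O\big(M_3^*(M_2^* )^2/M_1^4+M_4M_3M_2/M_1^5\big)$; (b) if $\Delta=O(\sqrt{M_1})$ then $\xi=O\big(M_3^*(M_2^* )^2/M_1^4\big)$.
   Context: For an integer $k\ge1$, $[x]_k=x(x-1)\cdots(x-k+1)$ and $M_k=\sum_{i=1}^n[d_i]_k$. Define $U_1=\sum_{v}(d_v-2)\min\{[d_v]_2/M_1,1\}$; $U_2=\sum_{u<v}\min\{[d_u]_2[d_v]_2/M_1^2,d_ud_v/M_1\}$; $U_3=\sum_{i\ne j}\sum_{w}\min\{[d_i]_2[d_j]_2/M_1^2,d_id_j/M_1\}\min\{[d_i-2]_2[d_w]_2/M_1^2,1\}(d_w-2)$; $U_4=\sum_{i\ne j}\min\{[d_i]_3[d_j]_2/M_1^2,[d_i]_2d_j/M_1\}$; $U_5=\sum_{i\ne j}\sum_{w}\min\{d_i[d_j]_2/M_1^2,d_j/M_1\}\min\{[d_i-2]_2[d_w]_2/M_1^2,(d_i-2)d_w/M_1\}$; $\xi=U_5+\frac{U_1+U_2^2+U_3}{M_1}+\frac{U_4M_2}{M_1^2}+\frac{U_2M_2^2}{M_1^3}+\frac{M_2}{M_1^2}+\frac{M_3M_2}{M_1^3}+\frac{M_2^3}{M_1^4}$ (vertex indices range over $\{1,\ldots,n\}$). *)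

theory Defs
  imports Complex_Main
begin

text \<open>Falling factorial [x]_k = x(x-1)...(x-k+1), evaluated over the reals
  (so e.g. [-1]_2 = 2).\<close>
definition ff :: "real \<Rightarrow> nat \<Rightarrow> real" where
  "ff x k = (\<Prod>i<k. (x - real i))"

definition Mk :: "nat \<Rightarrow> (nat \<Rightarrow> nat) \<Rightarrow> nat \<Rightarrow> real" where
  "Mk n d k = (\<Sum>i\<in>{1..n}. ff (real (d i)) k)"

definition U1 :: "nat \<Rightarrow> (nat \<Rightarrow> nat) \<Rightarrow> real" where
  "U1 n d = (let M1 = Mk n d 1 in
     \<Sum>v\<in>{1..n}. (real (d v) - 2) * min (ff (real (d v)) 2 / M1) 1)"

definition U2 :: "nat \<Rightarrow> (nat \<Rightarrow> nat) \<Rightarrow> real" where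
  "U2 n d = (let M1 = Mk n d 1 in
     \<Sum>u\<in>{1..n}. \<Sum>v\<in>{u<..n}.
        min (ff (real (d u)) 2 * ff (real (d v)) 2 / M1^2) (real (d u) * real (d v) / M1))"

definition U3 :: "nat \<Rightarrow> (nat \<Rightarrow> nat) \<Rightarrow> real" where
  "U3 n d = (let M1 = Mk n d 1 in
     \<Sum>i\<in>{1..n}. \<Sum>j\<in>{1..n} - {i}. \<Sum>w\<in>{1..n}.
        min (ff (real (d i)) 2 * ff (real (d j)) 2 / M1^2) (real (d i) * real (d j) / M1)
      * min (ff (real (d i) - 2) 2 * ff (real (d w)) 2 / M1^2) 1
      * (real (d w) - 2))"

definition U4 :: "nat \<Rightarrow> (nat \<Rightarrow> nat) \<Rightarrow> real" where
  "U4 n d = (let M1 = Mk n d 1 in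
     \<Sum>i\<in>{1..n}. \<Sum>j\<in>{1..n} - {i}.
        min (ff (real (d i)) 3 * ff (real (d j)) 2 / M1^2) (ff (real (d i)) 2 * real (d j) / M1))"

definition U5 :: "nat \<Rightarrow> (nat \<Rightarrow> nat) \<Rightarrow> real" where
  "U5 n d = (let M1 = Mk n d 1 in
     \<Sum>i\<in>{1..n}. \<Sum>j\<in>{1..n} - {i}. \<Sum>w\<in>{1..n}.
        min (real (d i) * ff (real (d j)) 2 / M1^2) (real (d j) / M1)
      * min (ff (real (d i) - 2) 2 * ff (real (d w)) 2 / M1^2)
            ((real (d i) - 2) * real (d w) / M1))"

definition xi :: "nat \<Rightarrow> (nat \<Rightarrow> nat) \<Rightarrow> real" where
  "xi n d = (let M1 = Mk n d 1; M2 = Mk n d 2; M3 = Mk n d 3 in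
     U5 n d + (U1 n d + (U2 n d)^2 + U3 n d) / M1 + U4 n d * M2 / M1^2
     + U2 n d * M2^2 / M1^3 + M2 / M1^2 + M3 * M2 / M1^3 + M2^3 / M1^4)"

definition degseq :: "nat \<Rightarrow> (nat \<Rightarrow> nat) \<Rightarrow> bool" where
  "degseq n d \<longleftrightarrow> 1 \<le> n \<and> (\<forall>i\<in>{1..n}. 1 \<le> d i) \<and>
     (\<forall>i j. 1 \<le> i \<longrightarrow> i \<le> j \<longrightarrow> j \<le> n \<longrightarrow> d j \<le> d i)"

end

theory Submission imports Defs "HOL-Analysis.Convex" begin

text \<open>Bounding every min in U1,...,U5 by its first argument turns each Ui into a product
  of falling-factorial moments over a power of M1; only U3 involves M4. With x = M2/M1 and
  y = M3/M1 everything except U3/M1 becomes a polynomial in x and y divided by M1, and the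
  Cauchy-Schwarz inequality M2^2 <= M1 (M3 + M2), i.e. x^2 <= x + y, shows that this polynomial
  is dominated by (y + 1)(x + 1)^2, which is (M3 + M1)(M2 + M1)^2/M1^4 after division by M1.
  The term U3/M1 is at most M4 M3 M2/M1^5, and if all degrees are at most Delta then
  [d]_4 <= Delta^2 [d]_2 gives M4 <= Delta^2 M2 <= K^2 M1 M2, which absorbs it into the main term.\<close>

lemma ff_expand:
  "ff x 1 = x" "ff x 2 = x * (x - 1)" "ff x 3 = x * (x - 1) * (x - 2)"
  "ff x 4 = x * (x - 1) * (x - 2) * (x - 3)"
  by (simp_all add: ff_def eval_nat_numeral lessThan_Suc algebra_simps)

lemma ff_of_nat_nonneg: "0 \<le> ff (real a) k"
proof (cases "k \<le> a")
  case True
  then show ?thesis unfolding ff_def by (auto intro!: prod_nonneg)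
next
  case False
  then have "ff (real a) k = 0" unfolding ff_def by (simp add: prod_zero_iff)
  then show ?thesis by simp
qed

lemma ff_of_nat_minus_two_nonneg: "0 \<le> ff (real a - 2) 2"
proof -
  have "a = 0 \<or> a = 1 \<or> a = 2 \<or> a \<ge> 3" by auto
  then show ?thesis by (auto simp: ff_expand)
qed

lemma ff_4_le_sq_mult_ff_2:
  assumes "real a \<le> D"
  shows "ff (real a) 4 \<le> D\<^sup>2 * ff (real a) 2"
proof (cases "a \<ge> 2")
  case True
  have "(real a - 2) * (real a - 3) \<le> (real a)\<^sup>2"
    using True by (simp add: power2_eq_square algebra_simps)
  also have "\<dots> \<le> D\<^sup>2"
    using assms by (intro power_mono) auto
  finally have "ff (real a) 2 * ((real a - 2) * (real a - 3)) \<le> ff (real a) 2 * D\<^sup>2"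
    using ff_of_nat_nonneg[of a 2] by (intro mult_left_mono)
  then show ?thesis by (simp add: ff_expand algebra_simps)
next
  case False
  then have "a = 0 \<or> a = 1" by auto
  then show ?thesis by (auto simp: ff_expand)
qed

lemma sum_sum_le_sum_mult_sum:
  fixes f :: "'a \<Rightarrow> 'a \<Rightarrow> real"
  assumes "finite S" "\<And>i. i \<in> S \<Longrightarrow> T i \<subseteq> S"
    and "\<And>i. i \<in> S \<Longrightarrow> 0 \<le> a i" "\<And>j. j \<in> S \<Longrightarrow> 0 \<le> b j"
    and "\<And>i j. i \<in> S \<Longrightarrow> j \<in> T i \<Longrightarrow> f i j \<le> a i * b j"
  shows "(\<Sum>i\<in>S. \<Sum>j\<in>T i. f i j) \<le> sum a S * sum b S"
proof -
  have "(\<Sum>i\<in>S. \<Sum>j\<in>T i. f i j) \<le> (\<Sum>i\<in>S. \<Sum>j\<in>T i. a i * b j)"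
    using assms(5) by (intro sum_mono) auto
  also have "\<dots> \<le> (\<Sum>i\<in>S. \<Sum>j\<in>S. a i * b j)"
    using assms(1-4) by (intro sum_mono sum_mono2) auto
  also have "\<dots> = sum a S * sum b S"
    by (simp add: sum_product)
  finally show ?thesis .
qed

lemma sum_sum_sum_le_sum_mult_sum_mult_sum:
  fixes f :: "'a \<Rightarrow> 'a \<Rightarrow> 'a \<Rightarrow> real"
  assumes "finite S" "\<And>i. i \<in> S \<Longrightarrow> T i \<subseteq> S"
    and "\<And>i. i \<in> S \<Longrightarrow> 0 \<le> a i" "\<And>j. j \<in> S \<Longrightarrow> 0 \<le> b j" "\<And>w. w \<in> S \<Longrightarrow> 0 \<le> c w"
    and "\<And>i j w. i \<in> S \<Longrightarrow> j \<in> T i \<Longrightarrow> w \<in> S \<Longrightarrow> f i j w \<le> a i * b j * c w"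
  shows "(\<Sum>i\<in>S. \<Sum>j\<in>T i. \<Sum>w\<in>S. f i j w) \<le> sum a S * sum b S * sum c S"
proof -
  have "(\<Sum>i\<in>S. \<Sum>j\<in>T i. \<Sum>w\<in>S. f i j w) \<le> sum a S * (\<Sum>j\<in>S. b j * sum c S)"
  proof (rule sum_sum_le_sum_mult_sum)
    fix i j assume "i \<in> S" "j \<in> T i"
    then have "(\<Sum>w\<in>S. f i j w) \<le> (\<Sum>w\<in>S. a i * b j * c w)"
      using assms(6) by (intro sum_mono) auto
    then show "(\<Sum>w\<in>S. f i j w) \<le> a i * (b j * sum c S)"
      by (simp add: sum_distrib_left mult.assoc)
  qed (use assms(1-5) in \<open>auto intro!: mult_nonneg_nonneg sum_nonneg\<close>)
  then show ?thesis
    by (simp add: sum_distrib_right mult.assoc)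
qed

lemma U1_term_le:
  assumes "M > 0"
  shows "(real a - 2) * min (ff (real a) 2 / M) 1 \<le> ff (real a) 3 / M"
proof (cases "a \<ge> 2")
  case True
  then have "(real a - 2) * min (ff (real a) 2 / M) 1 \<le> (real a - 2) * (ff (real a) 2 / M)"
    by (intro mult_left_mono) auto
  then show ?thesis by (simp add: ff_expand algebra_simps)
next
  case False
  then have "a = 0 \<or> a = 1" by auto
  then show ?thesis using assms by (auto simp: ff_expand)
qed

lemma U2_term_nonneg:
  assumes "M > 0"
  shows "0 \<le> min (ff (real a) 2 * ff (real b) 2 / M\<^sup>2) (real a * real b / M)"
  using assms ff_of_nat_nonneg[of a 2] ff_of_nat_nonneg[of b 2] by auto

lemma U3_term_le:
  assumes "M > 0"
  shows "min (ff (real a) 2 * ff (real b) 2 / M\<^sup>2) (real a * real b / M)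
      * min (ff (real a - 2) 2 * ff (real c) 2 / M\<^sup>2) 1 * (real c - 2)
      \<le> ff (real a) 4 * ff (real b) 2 * ff (real c) 3 / M ^ 4"
proof -
  define p where "p = min (ff (real a) 2 * ff (real b) 2 / M\<^sup>2) (real a * real b / M)"
  define q where "q = min (ff (real a - 2) 2 * ff (real c) 2 / M\<^sup>2) 1"
  have "0 \<le> p" unfolding p_def by (rule U2_term_nonneg[OF assms])
  moreover have "0 \<le> q"
    unfolding q_def using assms ff_of_nat_minus_two_nonneg[of a] ff_of_nat_nonneg[of c 2] by auto
  moreover have "0 \<le> ff (real a) 4 * ff (real b) 2 * ff (real c) 3 / M ^ 4"
    using assms ff_of_nat_nonneg[of a 4] ff_of_nat_nonneg[of b 2] ff_of_nat_nonneg[of c 3] by auto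
  ultimately have "p * q * (real c - 2) \<le> ff (real a) 4 * ff (real b) 2 * ff (real c) 3 / M ^ 4"
  proof (cases "c \<ge> 2")
    case True
    assume "0 \<le> p" "0 \<le> q"
    with True have "p * q * (real c - 2)
        \<le> (ff (real a) 2 * ff (real b) 2 / M\<^sup>2) * (ff (real a - 2) 2 * ff (real c) 2 / M\<^sup>2) * (real c - 2)"
      unfolding p_def q_def by (intro mult_right_mono mult_mono) auto
    also have "\<dots> = ff (real a) 4 * ff (real b) 2 * ff (real c) 3 / M ^ 4"
      using assms by (simp add: ff_expand field_simps power_def)
    finally show ?thesis .
  qed (auto intro: order_trans[OF mult_nonneg_nonpos])
  then show ?thesis unfolding p_def q_def .
qed

lemma U5_term_le:
  assumes "M > 0"
  shows "min (real a * ff (real b) 2 / M\<^sup>2) (real b / M)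
      * min (ff (real a - 2) 2 * ff (real c) 2 / M\<^sup>2) ((real a - 2) * real c / M)
      \<le> ff (real a) 3 * ff (real b) 2 * ff (real c) 2 / M ^ 4"
proof -
  define p where "p = min (real a * ff (real b) 2 / M\<^sup>2) (real b / M)"
  define q where "q = min (ff (real a - 2) 2 * ff (real c) 2 / M\<^sup>2) ((real a - 2) * real c / M)"
  have p: "0 \<le> p" unfolding p_def using assms ff_of_nat_nonneg[of b 2] by auto
  have R: "0 \<le> ff (real a) 3 * ff (real b) 2 * ff (real c) 2 / M ^ 4"
    using assms ff_of_nat_nonneg[of a 3] ff_of_nat_nonneg[of b 2] ff_of_nat_nonneg[of c 2] by auto
  consider "a \<le> 2" | "a \<ge> 3" by linarith
  then have "p * q \<le> ff (real a) 3 * ff (real b) 2 * ff (real c) 2 / M ^ 4"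
  proof cases
    case 1
    then have "(real a - 2) * real c / M \<le> 0"
      using assms by (simp add: divide_nonpos_pos mult_nonpos_nonneg)
    then have "q \<le> 0" unfolding q_def by linarith
    then show ?thesis using p R by (meson mult_nonneg_nonpos order_trans)
  next
    case 2
    have "0 \<le> q"
      unfolding q_def using 2 assms ff_of_nat_minus_two_nonneg[of a] ff_of_nat_nonneg[of c 2] by auto
    with p have "p * q \<le> (real a * ff (real b) 2 / M\<^sup>2) * (ff (real a - 2) 2 * ff (real c) 2 / M\<^sup>2)"
      unfolding p_def q_def by (intro mult_mono) auto
    also have "\<dots> = ff (real a) 3 * ff (real b) 2 * ff (real c) 2 / M ^ 4
        - 2 * real a * (real a - 2) * ff (real b) 2 * ff (real c) 2 / M ^ 4"
      using assms by (simp add: ff_expand field_simps power_def)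
    also have "\<dots> \<le> ff (real a) 3 * ff (real b) 2 * ff (real c) 2 / M ^ 4"
      using 2 assms ff_of_nat_nonneg[of b 2] ff_of_nat_nonneg[of c 2] by auto
    finally show ?thesis .
  qed
  then show ?thesis unfolding p_def q_def .
qed

lemma Mk_nonneg: "0 \<le> Mk n d k"
  unfolding Mk_def by (intro sum_nonneg ff_of_nat_nonneg)

lemma Mk_1_pos:
  assumes "degseq n d"
  shows "Mk n d 1 > 0"
proof -
  have "Mk n d 1 = (\<Sum>i\<in>{1..n}. real (d i))"
    unfolding Mk_def ff_expand ..
  also have "\<dots> > 0"
    using assms unfolding degseq_def by (intro sum_pos) (auto intro: Suc_le_lessD)
  finally show ?thesis .
qed

text \<open>Cauchy-Schwarz for d(d - 1) = \<surd>d \<cdot> \<surd>d (d - 1).\<close>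
lemma Mk_2_sq_le: "(Mk n d 2)\<^sup>2 \<le> Mk n d 1 * (Mk n d 3 + Mk n d 2)"
proof -
  define a where "a i = sqrt (real (d i))" for i
  define b where "b i = sqrt (real (d i)) * (real (d i) - 1)" for i
  have "Mk n d 2 = (\<Sum>i\<in>{1..n}. a i * b i)"
    unfolding Mk_def a_def b_def by (intro sum.cong) (auto simp: ff_expand mult.assoc[symmetric])
  moreover have "Mk n d 1 = (\<Sum>i\<in>{1..n}. (a i)\<^sup>2)"
    unfolding Mk_def a_def ff_expand by (intro sum.cong) auto
  moreover have "Mk n d 3 + Mk n d 2 = (\<Sum>i\<in>{1..n}. (b i)\<^sup>2)"
    unfolding Mk_def b_def sum.distrib[symmetric]
    by (intro sum.cong) (auto simp: ff_expand power_mult_distrib power2_eq_square algebra_simps)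
  ultimately show ?thesis
    using Cauchy_Schwarz_ineq_sum[of a b "{1..n}"] by simp
qed

lemma sum_ff_divide: "(\<Sum>i\<in>{1..n}. ff (real (d i)) k / M) = Mk n d k / M"
  unfolding Mk_def by (simp add: sum_divide_distrib)

lemma U1_le: "Mk n d 1 > 0 \<Longrightarrow> U1 n d \<le> Mk n d 3 / Mk n d 1"
  unfolding U1_def Let_def sum_ff_divide[symmetric] by (intro sum_mono U1_term_le)

lemma U2_nonneg: "Mk n d 1 > 0 \<Longrightarrow> 0 \<le> U2 n d"
  unfolding U2_def Let_def by (intro sum_nonneg U2_term_nonneg)

lemma U2_le:
  assumes "Mk n d 1 > 0"
  shows "U2 n d \<le> Mk n d 2 * (Mk n d 2 / (Mk n d 1)\<^sup>2)"
  unfolding U2_def Let_def sum_ff_divide[where k=2, symmetric] unfolding Mk_def[of n d 2]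
  using assms by (intro sum_sum_le_sum_mult_sum) (auto simp: ff_of_nat_nonneg)

lemma U4_le:
  assumes "Mk n d 1 > 0"
  shows "U4 n d \<le> Mk n d 3 * (Mk n d 2 / (Mk n d 1)\<^sup>2)"
  unfolding U4_def Let_def Mk_def[of n d 3] sum_ff_divide[where k=2, symmetric]
  using assms by (intro sum_sum_le_sum_mult_sum) (auto simp: ff_of_nat_nonneg)

lemma U5_le:
  assumes "Mk n d 1 > 0"
  shows "U5 n d \<le> Mk n d 3 * Mk n d 2 * (Mk n d 2 / Mk n d 1 ^ 4)"
  unfolding U5_def Let_def sum_ff_divide[where k=2, symmetric] unfolding Mk_def[of n d 3] Mk_def[of n d 2]
  using assms U5_term_le[OF assms]
  by (intro sum_sum_sum_le_sum_mult_sum_mult_sum) (auto simp: ff_of_nat_nonneg)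

lemma U3_le:
  assumes "Mk n d 1 > 0"
  shows "U3 n d \<le> Mk n d 4 * Mk n d 2 * (Mk n d 3 / Mk n d 1 ^ 4)"
  unfolding U3_def Let_def Mk_def[of n d 4] Mk_def[of n d 2] sum_ff_divide[where k=3, symmetric]
  using assms U3_term_le[OF assms]
  by (intro sum_sum_sum_le_sum_mult_sum_mult_sum) (auto simp: ff_of_nat_nonneg)

lemma Mk_4_le_max_degree:
  assumes "\<And>i. i \<in> {1..n} \<Longrightarrow> real (d i) \<le> D"
  shows "Mk n d 4 \<le> D\<^sup>2 * Mk n d 2"
  unfolding Mk_def sum_distrib_left using assms by (intro sum_mono ff_4_le_sq_mult_ff_2)

lemma xi_eq_normalized:
  assumes "Mk n d 1 \<noteq> 0"
  shows "xi n d = U5 n d + (U1 n d + (U2 n d)\<^sup>2 + U3 n d + U4 n d * (Mk n d 2 / Mk n d 1)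
    + U2 n d * (Mk n d 2 / Mk n d 1)\<^sup>2 + Mk n d 2 / Mk n d 1
    + Mk n d 3 / Mk n d 1 * (Mk n d 2 / Mk n d 1) + (Mk n d 2 / Mk n d 1) ^ 3) / Mk n d 1"
  using assms unfolding xi_def Let_def
  by (simp add: field_simps power2_eq_square power3_eq_cube eval_nat_numeral)

lemma xi_polynomial_le:
  fixes x y :: real
  assumes "0 \<le> x" "0 \<le> y" "x\<^sup>2 \<le> x + y"
  shows "2 * (y * x\<^sup>2) + y + 2 * x ^ 4 + x + x * y + x ^ 3 \<le> 10 * (y + 1) * (x + 1)\<^sup>2"
proof -
  have "x ^ 3 \<le> x\<^sup>2 + x * y"
    using mult_left_mono[OF assms(3) assms(1)] by (simp add: power2_eq_square power3_eq_cube algebra_simps)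
  moreover have "x ^ 4 \<le> x ^ 3 + y * x\<^sup>2"
    using mult_left_mono[OF assms(3), of "x\<^sup>2"]
    by (simp add: power2_eq_square power3_eq_cube eval_nat_numeral algebra_simps)
  moreover have "10 * (y + 1) * (x + 1)\<^sup>2 = 10 * (y * x\<^sup>2) + 20 * (x * y) + 10 * y + 10 * x\<^sup>2 + 20 * x + 10"
    by (simp add: power2_eq_square algebra_simps)
  moreover have "0 \<le> x * y" "0 \<le> y * x\<^sup>2" "0 \<le> x\<^sup>2"
    using assms by auto
  ultimately show ?thesis
    using assms by linarith
qed

lemma normalized_xi_le:
  fixes m x y u1 u2 u3 u4 u5 :: real
  assumes "m > 0" "0 \<le> x" "0 \<le> y" "x\<^sup>2 \<le> x + y"
    and "u1 \<le> y" "0 \<le> u2" "u2 \<le> x\<^sup>2" "u4 \<le> y * x" "u5 \<le> y * x\<^sup>2 / m"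
  shows "u5 + (u1 + u2\<^sup>2 + u3 + u4 * x + u2 * x\<^sup>2 + x + y * x + x ^ 3) / m
    \<le> 10 * (y + 1) * (x + 1)\<^sup>2 / m + u3 / m"
proof -
  have "u2\<^sup>2 \<le> (x\<^sup>2)\<^sup>2" "u2 * x\<^sup>2 \<le> x\<^sup>2 * x\<^sup>2"
    using assms(6,7) by (intro power_mono mult_right_mono; simp)+
  moreover have "u4 * x \<le> y * x * x"
    using assms(2,8) by (intro mult_right_mono)
  ultimately have "u1 + u2\<^sup>2 + u3 + u4 * x + u2 * x\<^sup>2 + x + y * x + x ^ 3
      \<le> y + (x\<^sup>2)\<^sup>2 + u3 + y * x * x + x\<^sup>2 * x\<^sup>2 + x + y * x + x ^ 3"
    using assms(5) by linarith
  then have "(u1 + u2\<^sup>2 + u3 + u4 * x + u2 * x\<^sup>2 + x + y * x + x ^ 3) / m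
      \<le> (y + (x\<^sup>2)\<^sup>2 + u3 + y * x * x + x\<^sup>2 * x\<^sup>2 + x + y * x + x ^ 3) / m"
    using assms(1) by (intro divide_right_mono) auto
  then have "u5 + (u1 + u2\<^sup>2 + u3 + u4 * x + u2 * x\<^sup>2 + x + y * x + x ^ 3) / m
      \<le> y * x\<^sup>2 / m + (y + (x\<^sup>2)\<^sup>2 + u3 + y * x * x + x\<^sup>2 * x\<^sup>2 + x + y * x + x ^ 3) / m"
    using assms(9) by linarith
  also have "\<dots> = (2 * (y * x\<^sup>2) + y + 2 * x ^ 4 + x + x * y + x ^ 3) / m + u3 / m"
    using assms(1) by (simp add: field_simps power2_eq_square eval_nat_numeral)
  also have "\<dots> \<le> 10 * (y + 1) * (x + 1)\<^sup>2 / m + u3 / m"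
    using xi_polynomial_le[OF assms(2-4)] assms(1) by (intro add_mono divide_right_mono) auto
  finally show ?thesis .
qed

lemma xi_le:
  assumes "degseq n d"
  shows "xi n d \<le> 10 * ((Mk n d 3 + Mk n d 1) * (Mk n d 2 + Mk n d 1)\<^sup>2 / (Mk n d 1) ^ 4)
    + Mk n d 4 * Mk n d 3 * Mk n d 2 / (Mk n d 1) ^ 5"
proof -
  define m where "m = Mk n d 1"
  define x where "x = Mk n d 2 / m"
  define y where "y = Mk n d 3 / m"
  have m: "m > 0"
    unfolding m_def by (rule Mk_1_pos[OF assms])
  have xy: "0 \<le> x" "0 \<le> y"
    unfolding x_def y_def using m Mk_nonneg by auto
  have "x\<^sup>2 \<le> x + y"
    using Mk_2_sq_le[of n d] m unfolding x_def y_def m_def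
    by (simp add: field_simps power2_eq_square)
  moreover have "U1 n d \<le> y"
    using U1_le m unfolding y_def m_def by blast
  moreover have "0 \<le> U2 n d" "U2 n d \<le> x\<^sup>2"
    using U2_nonneg U2_le m unfolding x_def m_def by (auto simp: power2_eq_square)
  moreover have "U4 n d \<le> y * x"
    using U4_le m unfolding x_def y_def m_def by (simp add: power2_eq_square)
  moreover have "Mk n d 3 * Mk n d 2 * (Mk n d 2 / m ^ 4) = y * x\<^sup>2 / m"
    using m unfolding x_def y_def by (simp add: field_simps power2_eq_square eval_nat_numeral)
  then have "U5 n d \<le> y * x\<^sup>2 / m"
    using U5_le[of n d] m unfolding m_def by simp
  ultimately have "xi n d \<le> 10 * (y + 1) * (x + 1)\<^sup>2 / m + U3 n d / m"
    using normalized_xi_le[OF m xy] m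
    unfolding xi_eq_normalized[of n d, folded m_def, folded x_def y_def, OF m[THEN less_imp_neq, symmetric]]
    by blast
  also have "\<dots> \<le> 10 * (y + 1) * (x + 1)\<^sup>2 / m + Mk n d 4 * Mk n d 3 * Mk n d 2 / m ^ 4 / m"
    using U3_le[of n d] m unfolding m_def by (intro add_mono divide_right_mono) (auto simp: mult_ac)
  also have "\<dots> = 10 * ((Mk n d 3 + m) * (Mk n d 2 + m)\<^sup>2 / m ^ 4) + Mk n d 4 * Mk n d 3 * Mk n d 2 / m ^ 5"
    using m unfolding x_def y_def by (simp add: field_simps power2_eq_square eval_nat_numeral)
  finally show ?thesis unfolding m_def .
qed

lemma fourth_moment_term_le_of_max_degree:
  assumes "degseq n d" and "real (d 1) \<le> K * sqrt (Mk n d 1)"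
  shows "Mk n d 4 * Mk n d 3 * Mk n d 2 / (Mk n d 1) ^ 5
    \<le> K\<^sup>2 * ((Mk n d 3 + Mk n d 1) * (Mk n d 2 + Mk n d 1)\<^sup>2 / (Mk n d 1) ^ 4)"
proof -
  define m where "m = Mk n d 1"
  have m: "m > 0"
    unfolding m_def by (rule Mk_1_pos[OF assms(1)])
  have M2: "0 \<le> Mk n d 2" and M3: "0 \<le> Mk n d 3"
    by (rule Mk_nonneg)+
  have "(real (d 1))\<^sup>2 \<le> (K * sqrt m)\<^sup>2"
    using assms(2) unfolding m_def by (intro power_mono) auto
  then have "(real (d 1))\<^sup>2 \<le> K\<^sup>2 * m"
    using m by (simp add: power_mult_distrib)
  moreover have "Mk n d 4 \<le> (real (d 1))\<^sup>2 * Mk n d 2"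
    using assms(1) unfolding degseq_def by (intro Mk_4_le_max_degree) auto
  ultimately have "Mk n d 4 \<le> K\<^sup>2 * m * Mk n d 2"
    using M2 by (meson mult_right_mono order_trans)
  then have "Mk n d 4 * (Mk n d 3 * Mk n d 2) / m ^ 5 \<le> K\<^sup>2 * m * Mk n d 2 * (Mk n d 3 * Mk n d 2) / m ^ 5"
    using m M2 M3 by (intro divide_right_mono mult_right_mono) auto
  also have "\<dots> = K\<^sup>2 * (Mk n d 3 * (Mk n d 2)\<^sup>2 / m ^ 4)"
    using m by (simp add: field_simps power2_eq_square eval_nat_numeral)
  also have "\<dots> \<le> K\<^sup>2 * ((Mk n d 3 + m) * (Mk n d 2 + m)\<^sup>2 / m ^ 4)"
    using m M2 M3 by (intro mult_left_mono divide_right_mono mult_mono power_mono) auto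
  finally show ?thesis
    unfolding m_def by (simp add: mult.assoc)
qed

theorem corollary4p1:
  shows "(\<exists>C>0. \<forall>n d. degseq n d \<longrightarrow>
            xi n d \<le> C * ((Mk n d 3 + Mk n d 1) * (Mk n d 2 + Mk n d 1)^2 / (Mk n d 1)^4
                        + Mk n d 4 * Mk n d 3 * Mk n d 2 / (Mk n d 1)^5))
       \<and> (\<forall>K. \<exists>C>0. \<forall>n d. degseq n d \<longrightarrow> real (d 1) \<le> K * sqrt (Mk n d 1) \<longrightarrow>
            xi n d \<le> C * ((Mk n d 3 + Mk n d 1) * (Mk n d 2 + Mk n d 1)^2 / (Mk n d 1)^4))"
proof (intro conjI allI)
  show "\<exists>C>0. \<forall>n d. degseq n d \<longrightarrow>
            xi n d \<le> C * ((Mk n d 3 + Mk n d 1) * (Mk n d 2 + Mk n d 1)^2 / (Mk n d 1)^4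
                        + Mk n d 4 * Mk n d 3 * Mk n d 2 / (Mk n d 1)^5)"
  proof (intro exI[of _ 10] conjI allI impI)
    fix n d assume "degseq n d"
    moreover have "0 \<le> Mk n d 4 * Mk n d 3 * Mk n d 2 / (Mk n d 1)^5"
      by (simp add: Mk_nonneg)
    ultimately show "xi n d \<le> 10 * ((Mk n d 3 + Mk n d 1) * (Mk n d 2 + Mk n d 1)^2 / (Mk n d 1)^4
                        + Mk n d 4 * Mk n d 3 * Mk n d 2 / (Mk n d 1)^5)"
      using xi_le[of n d] unfolding distrib_left by linarith
  qed simp
next
  fix K :: real
  show "\<exists>C>0. \<forall>n d. degseq n d \<longrightarrow> real (d 1) \<le> K * sqrt (Mk n d 1) \<longrightarrow>
            xi n d \<le> C * ((Mk n d 3 + Mk n d 1) * (Mk n d 2 + Mk n d 1)^2 / (Mk n d 1)^4)"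
  proof (intro exI[of _ "10 + K\<^sup>2"] conjI allI impI)
    fix n d assume "degseq n d" "real (d 1) \<le> K * sqrt (Mk n d 1)"
    from xi_le[OF this(1)] fourth_moment_term_le_of_max_degree[OF this]
    show "xi n d \<le> (10 + K\<^sup>2) * ((Mk n d 3 + Mk n d 1) * (Mk n d 2 + Mk n d 1)^2 / (Mk n d 1)^4)"
      unfolding distrib_right by linarith
  qed (simp add: add_pos_nonneg)
qed

end
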